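(* Let $m_1\ge1$, $m_2\ge0$, and let $F_i:[0,\infty)^{m_1}\to\mathbb{R}$, $G_i:[0,\infty)^{m_1+m_2}\to\mathbb{R}$ ($i=1,\dots,m_1$), $H_j:[0,\infty)^{m_1+m_2}\to\mathbb{R}$ ($j=1,\dots,m_2$). Assume there exist an $(m_1+m_2)\times(m_1+m_2)$ lower triangular matrix $A=(a_{kl})$ with nonnegative entries and diagonal entries $1$, exponents $p_\Omega,p_M,\mu_M$ and a constant $L_2\ge0$ such that for all $u\in[0,\infty)^{m_1},v\in[0,\infty)^{m_2}$: for every $k$, $\sum_{l\le m_1}a_{kl}F_l(u)\le L_2(\sum_iu_i^{p_\Omega}+1)$; for $k\le m_1$, $\sum_{l\le m_1}a_{kl}G_l(u,v)\le L_2(\sum_iu_i^{p_M}+\sum_jv_j^{p_M}+1)$; for $k>m_1$, $\sum_{l\le m_1}a_{kl}G_l(u,v)+\sum_{l\le m_2}a_{k,m_1+l}H_l(u,v)\le L_2(\sum_iu_i^{\mu_M}+\sum_jv_j^{\mu_M}+1)$. Then there exist componentwise increasing functions $g_j:\mathbb{R}^{m_1-j}\to\mathbb{R}$, $j=1,\dots,m_1-1$, such that whenever $\ell\in(0,\infty)^{m_1}$ satisfies $\ell_j>g_j(\ell_{j+1},\dots,\ell_{m_1})$ for $j=1,\dots,m_1-1$, there exists $L_\ell>0$ with $$\sum_{i=1}^{m_1}\ell_iF_i(u)\le L_\ell\Big(\sum_{i=1}^{m_1}u_i^{p_\Omega}+1\Big)\ \ \forall u\in[0,\infty)^{m_1},\qquad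 \sum_{i=1}^{m_1}\ell_iG_i(u,v)\le L_\ell\Big(\sum_{i=1}^{m_1}u_i^{p_M}+\sum_{j=1}^{m_2}v_j^{p_M}+1\Big)\ \ \forall u,v\ge0.$$ *)

theory Defs
  imports Complex_Main
begin

text \<open>Vectors are functions nat => real, with indices 1..m relevant.
  Nonnegative vectors of dimension m (only indices 1..m are constrained).\<close>
definition nonneg_vec :: "nat \<Rightarrow> (nat \<Rightarrow> real) \<Rightarrow> bool" where
  "nonneg_vec m u \<longleftrightarrow> (\<forall>i\<in>{1..m}. 0 \<le> u i)"

definition pos_vec :: "nat \<Rightarrow> (nat \<Rightarrow> real) \<Rightarrow> bool" where
  "pos_vec m u \<longleftrightarrow> (\<forall>i\<in>{1..m}. 0 < u i)"

definition comp_incr :: "nat \<Rightarrow> (real list \<Rightarrow> real) \<Rightarrow> bool" where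
  "comp_incr n g \<longleftrightarrow> (\<forall>xs ys. length xs = n \<and> length ys = n \<and> list_all2 (\<le>) xs ys \<longrightarrow> g xs \<le> g ys)"

end

theory Submission
  imports Defs
begin

text \<open>The thresholds are \<open>g\<^sub>j(\<ell>\<^sub>j\<^sub>+\<^sub>1, \<dots>, \<ell>\<^sub>m\<^sub>1) = (\<Sum>k>j. a\<^sub>k\<^sub>j \<ell>\<^sub>k)\<close>.
  Above them, back-substitution writes \<open>\<ell>\<^sup>T = c\<^sup>T A\<close> with coefficients \<open>0 \<le> c \<le> \<ell>\<close>:
  subtracting \<open>\<ell>\<^sub>m\<close> times the last row of \<open>A\<close> leaves weights that again lie above the
  thresholds of the smaller matrix. Hence \<open>\<Sum>\<^sub>i \<ell>\<^sub>i F\<^sub>i\<close> is a nonnegative combination of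
  the row bounds on \<open>A F\<close> and is at most \<open>(\<Sum>\<^sub>i \<ell>\<^sub>i) L\<^sub>2 (\<Sum>\<^sub>i u\<^sub>i\<^sup>p + 1)\<close>; likewise for \<open>G\<close>.\<close>

lemma weighted_sum_le_of_lower_triangular_row_bounds:
  fixes A :: "nat \<Rightarrow> nat \<Rightarrow> real" and f w :: "nat \<Rightarrow> real" and B :: real
  assumes lower: "\<forall>k\<in>{1..m}. \<forall>l\<in>{1..m}. k < l \<longrightarrow> A k l = 0"
    and nonneg: "\<forall>k\<in>{1..m}. \<forall>l\<in>{1..m}. 0 \<le> A k l"
    and diag: "\<forall>k\<in>{1..m}. A k k = 1"
    and rows: "\<forall>k\<in>{1..m}. (\<Sum>l=1..m. A k l * f l) \<le> B"
    and "B \<ge> 0"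
    and w_nonneg: "\<forall>j\<in>{1..m}. 0 \<le> w j"
    and w_dominates: "\<forall>j\<in>{1..m}. (\<Sum>k=j+1..m. w k * A k j) \<le> w j"
  shows "(\<Sum>l=1..m. w l * f l) \<le> (\<Sum>l=1..m. w l) * B"
  using assms
proof (induction m arbitrary: w)
  case 0
  then show ?case by simp
next
  case (Suc m)
  note lower = Suc.prems(1) and nonneg = Suc.prems(2) and diag = Suc.prems(3)
    and rows = Suc.prems(4) and w_nonneg = Suc.prems(6) and w_dominates = Suc.prems(7)
  let ?c = "w (Suc m)"
  define w' where "w' l = w l - ?c * A (Suc m) l" for l
  have c_nonneg: "0 \<le> ?c"
    using w_nonneg by simp
  have rows': "\<forall>k\<in>{1..m}. (\<Sum>l=1..m. A k l * f l) \<le> B"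
  proof
    fix k assume k: "k \<in> {1..m}"
    have "(\<Sum>l=1..Suc m. A k l * f l) \<le> B"
      using rows k by simp
    moreover have "A k (Suc m) = 0"
      using lower k by auto
    ultimately show "(\<Sum>l=1..m. A k l * f l) \<le> B"
      by simp
  qed
  have tail_split: "(\<Sum>k=j+1..Suc m. w k * A k j) = (\<Sum>k=j+1..m. w k * A k j) + ?c * A (Suc m) j"
    if "j \<in> {1..m}" for j
    using that by simp
  have tail_decrease: "(\<Sum>k=j+1..m. w' k * A k j) \<le> (\<Sum>k=j+1..m. w k * A k j)"
    if "j \<in> {1..m}" for j
  proof (rule sum_mono)
    fix k assume "k \<in> {j+1..m}"
    then have "0 \<le> ?c * A (Suc m) k * A k j"
      using nonneg c_nonneg that by auto
    then show "w' k * A k j \<le> w k * A k j"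
      unfolding w'_def by (simp add: algebra_simps)
  qed
  have tail_le: "(\<Sum>k=j+1..m. w k * A k j) \<le> w' j" if j: "j \<in> {1..m}" for j
  proof -
    have "j \<in> {1..Suc m}"
      using j by simp
    then have "(\<Sum>k=j+1..Suc m. w k * A k j) \<le> w j"
      using w_dominates by blast
    then show ?thesis
      using tail_split[OF j] unfolding w'_def by linarith
  qed
  have w'_dominates: "\<forall>j\<in>{1..m}. (\<Sum>k=j+1..m. w' k * A k j) \<le> w' j"
    using tail_decrease tail_le order_trans by blast
  have w'_nonneg: "\<forall>j\<in>{1..m}. 0 \<le> w' j"
  proof
    fix j assume j: "j \<in> {1..m}"
    have "0 \<le> (\<Sum>k=j+1..m. w k * A k j)"
      using nonneg w_nonneg j by (intro sum_nonneg) auto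
    then show "0 \<le> w' j"
      using tail_le[OF j] by linarith
  qed
  have IH: "(\<Sum>l=1..m. w' l * f l) \<le> (\<Sum>l=1..m. w' l) * B"
    using Suc.IH[of w'] lower nonneg diag \<open>B \<ge> 0\<close> rows' w'_nonneg w'_dominates by auto
  have peel: "(\<Sum>l=1..Suc m. w l * f l) = ?c * (\<Sum>l=1..Suc m. A (Suc m) l * f l) + (\<Sum>l=1..m. w' l * f l)"
    using diag unfolding w'_def by (simp add: sum_distrib_left algebra_simps sum_subtractf)
  have "(\<Sum>l=1..m. w' l) \<le> (\<Sum>l=1..m. w l)"
    unfolding w'_def using nonneg c_nonneg by (intro sum_mono) auto
  then have "(\<Sum>l=1..m. w' l) * B \<le> (\<Sum>l=1..m. w l) * B"
    using \<open>B \<ge> 0\<close> by (rule mult_right_mono)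
  moreover have "?c * (\<Sum>l=1..Suc m. A (Suc m) l * f l) \<le> ?c * B"
    using rows c_nonneg by (intro mult_left_mono) auto
  ultimately show ?case
    using peel IH by (simp add: algebra_simps)
qed

definition column_tail_sum :: "(nat \<Rightarrow> nat \<Rightarrow> real) \<Rightarrow> nat \<Rightarrow> real list \<Rightarrow> real" where
  "column_tail_sum A j xs = (\<Sum>i<length xs. xs ! i * A (j+1+i) j)"

lemma comp_incr_column_tail_sum:
  assumes "\<forall>i<n. 0 \<le> A (j+1+i) j"
  shows "comp_incr n (column_tail_sum A j)"
  unfolding comp_incr_def column_tail_sum_def
proof (intro allI impI)
  fix xs ys :: "real list"
  assume len: "length xs = n \<and> length ys = n \<and> list_all2 (\<le>) xs ys"
  have "(\<Sum>i<n. xs ! i * A (j+1+i) j) \<le> (\<Sum>i<n. ys ! i * A (j+1+i) j)"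
    using assms len by (intro sum_mono mult_right_mono) (auto dest: list_all2_nthD)
  then show "(\<Sum>i<length xs. xs ! i * A (j+1+i) j) \<le> (\<Sum>i<length ys. ys ! i * A (j+1+i) j)"
    using len by simp
qed

lemma column_tail_sum_map_upt:
  assumes "j \<le> m"
  shows "column_tail_sum A j (map w [j+1..<m+1]) = (\<Sum>k=j+1..m. w k * A k j)"
proof -
  have "column_tail_sum A j (map w [j+1..<m+1]) = (\<Sum>i<m-j. w (i+(j+1)) * A (i+(j+1)) j)"
    unfolding column_tail_sum_def by (intro sum.cong) (auto simp: nth_map nth_upt ac_simps simp del: upt_Suc)
  also have "\<dots> = (\<Sum>k=j+1..m. w k * A k j)"
    by (rule sum.reindex_bij_witness[of _ "\<lambda>k. k - (j+1)" "\<lambda>i. i + (j+1)"]) (use assms in auto)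
  finally show ?thesis .
qed

lemma column_tail_sums_le_weights:
  assumes "pos_vec m w" and "\<forall>j\<in>{1..m-1}. w j > column_tail_sum A j (map w [j+1..<m+1])"
  shows "\<forall>j\<in>{1..m}. (\<Sum>k=j+1..m. w k * A k j) \<le> w j"
proof
  fix j assume j: "j \<in> {1..m}"
  show "(\<Sum>k=j+1..m. w k * A k j) \<le> w j"
  proof (cases "j = m")
    case True
    then show ?thesis
      using assms(1) j unfolding pos_vec_def by force
  next
    case False
    then have "j \<in> {1..m-1}"
      using j by auto
    then have "column_tail_sum A j (map w [j+1..<m+1]) < w j"
      using assms(2) by blast
    then show ?thesis
      using column_tail_sum_map_upt[of j m A w] j by simp
  qed
qed

theorem lemma2p3:
  fixes m1 m2 :: nat
    and F :: "nat \<Rightarrow> (nat \<Rightarrow> real) \<Rightarrow> real"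
    and G H :: "nat \<Rightarrow> (nat \<Rightarrow> real) \<Rightarrow> (nat \<Rightarrow> real) \<Rightarrow> real"
    and A :: "nat \<Rightarrow> nat \<Rightarrow> real"
    and p\<Omega> pM \<mu>M L2 :: real
  assumes m1: "m1 \<ge> 1"
    and A_nonneg: "\<forall>k\<in>{1..m1+m2}. \<forall>l\<in>{1..m1+m2}. 0 \<le> A k l"
    and A_lower: "\<forall>k\<in>{1..m1+m2}. \<forall>l\<in>{1..m1+m2}. k < l \<longrightarrow> A k l = 0"
    and A_diag: "\<forall>k\<in>{1..m1+m2}. A k k = 1"
    and L2: "L2 \<ge> 0"
    and hF: "\<forall>u. nonneg_vec m1 u \<longrightarrow> (\<forall>k\<in>{1..m1+m2}.
              (\<Sum>l=1..m1. A k l * F l u) \<le> L2 * ((\<Sum>i=1..m1. u i powr p\<Omega>) + 1))"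
    and hG: "\<forall>u v. nonneg_vec m1 u \<longrightarrow> nonneg_vec m2 v \<longrightarrow> (\<forall>k\<in>{1..m1}.
              (\<Sum>l=1..m1. A k l * G l u v)
                \<le> L2 * ((\<Sum>i=1..m1. u i powr pM) + (\<Sum>j=1..m2. v j powr pM) + 1))"
    and hH: "\<forall>u v. nonneg_vec m1 u \<longrightarrow> nonneg_vec m2 v \<longrightarrow> (\<forall>k\<in>{m1+1..m1+m2}.
              (\<Sum>l=1..m1. A k l * G l u v) + (\<Sum>l=1..m2. A k (m1+l) * H l u v)
                \<le> L2 * ((\<Sum>i=1..m1. u i powr \<mu>M) + (\<Sum>j=1..m2. v j powr \<mu>M) + 1))"
  shows "\<exists>g :: nat \<Rightarrow> real list \<Rightarrow> real.
           (\<forall>j\<in>{1..m1-1}. comp_incr (m1 - j) (g j)) \<and>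
           (\<forall>lv. pos_vec m1 lv \<and> (\<forall>j\<in>{1..m1-1}. lv j > g j (map lv [j+1..<m1+1])) \<longrightarrow>
              (\<exists>Ll > 0.
                 (\<forall>u. nonneg_vec m1 u \<longrightarrow>
                    (\<Sum>i=1..m1. lv i * F i u) \<le> Ll * ((\<Sum>i=1..m1. u i powr p\<Omega>) + 1)) \<and>
                 (\<forall>u v. nonneg_vec m1 u \<longrightarrow> nonneg_vec m2 v \<longrightarrow>
                    (\<Sum>i=1..m1. lv i * G i u v)
                      \<le> Ll * ((\<Sum>i=1..m1. u i powr pM) + (\<Sum>j=1..m2. v j powr pM) + 1))))"
proof -
  let ?g = "column_tail_sum A"
  have incr: "\<forall>j\<in>{1..m1-1}. comp_incr (m1 - j) (?g j)"
    using A_nonneg by (auto intro!: comp_incr_column_tail_sum)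
  have "\<exists>Ll > 0. (\<forall>u. nonneg_vec m1 u \<longrightarrow>
                    (\<Sum>i=1..m1. lv i * F i u) \<le> Ll * ((\<Sum>i=1..m1. u i powr p\<Omega>) + 1)) \<and>
                 (\<forall>u v. nonneg_vec m1 u \<longrightarrow> nonneg_vec m2 v \<longrightarrow>
                    (\<Sum>i=1..m1. lv i * G i u v)
                      \<le> Ll * ((\<Sum>i=1..m1. u i powr pM) + (\<Sum>j=1..m2. v j powr pM) + 1))"
    if lv_pos: "pos_vec m1 lv" and lv_large: "\<forall>j\<in>{1..m1-1}. lv j > ?g j (map lv [j+1..<m1+1])"
    for lv
  proof -
    have lv_nonneg: "\<forall>j\<in>{1..m1}. 0 \<le> lv j"
      using lv_pos unfolding pos_vec_def by force
    note lv_dominates = column_tail_sums_le_weights[OF lv_pos lv_large]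
    define T where "T = (\<Sum>l=1..m1. lv l)"
    have "T \<ge> 0"
      unfolding T_def using lv_nonneg by (intro sum_nonneg) auto
    have bound: "(\<Sum>l=1..m1. lv l * f l) \<le> (T * L2 + 1) * X"
      if "\<forall>k\<in>{1..m1}. (\<Sum>l=1..m1. A k l * f l) \<le> L2 * X" and "X \<ge> 0" for f X
    proof -
      have "(\<Sum>l=1..m1. lv l * f l) \<le> T * (L2 * X)"
        unfolding T_def using A_lower A_nonneg A_diag that L2 lv_nonneg lv_dominates
        by (intro weighted_sum_le_of_lower_triangular_row_bounds) auto
      with \<open>X \<ge> 0\<close> show ?thesis by (simp add: algebra_simps)
    qed
    show ?thesis
      using \<open>T \<ge> 0\<close> L2 hF hG
      by (intro exI[of _ "T * L2 + 1"] conjI allI impI bound)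
        (auto intro!: add_nonneg_pos add_nonneg_nonneg sum_nonneg)
  qed
  then show ?thesis
    using incr by blast
qed

end
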